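(* Let $S$ be a semigroup. Every proper interior ideal of $S$ is minimal if and only if any two distinct proper interior ideals of $S$ have empty intersection.
   Context: A subsemigroup $I$ of $S$ (non-empty with $II\subseteq I$) is an interior ideal if $SIS\subseteq I$; it is proper if $I\neq S$. An interior ideal $I$ is minimal if the only interior ideal of $S$ contained in $I$ is $I$ itself. *)

theory Defs
  imports Main
begin

text \<open>The semigroup S is the universe of a type of class semigroup_mult.\<close>

definition interior_ideal :: "'a::semigroup_mult set \<Rightarrow> bool" where
  "interior_ideal I \<longleftrightarrow> I \<noteq> {}
     \<and> (\<forall>a\<in>I. \<forall>b\<in>I. a * b \<in> I)
     \<and> (\<forall>s t a. a \<in> I \<longrightarrow> s * a * t \<in> I)"

definition proper_interior_ideal :: "'a::semigroup_mult set \<Rightarrow> bool" where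
  "proper_interior_ideal I \<longleftrightarrow> interior_ideal I \<and> I \<noteq> UNIV"

definition minimal_interior_ideal :: "'a::semigroup_mult set \<Rightarrow> bool" where
  "minimal_interior_ideal I \<longleftrightarrow> interior_ideal I
     \<and> (\<forall>J. interior_ideal J \<and> J \<subseteq> I \<longrightarrow> J = I)"

end

theory Submission
  imports Defs
begin

text \<open>Two interior ideals that meet intersect in an interior ideal contained in both, so
  under minimality two proper interior ideals that meet coincide. Conversely, an interior
  ideal inside a proper one is itself proper and nonempty, so it meets the larger ideal and
  disjointness forces equality.\<close>

lemma interior_ideal_nonempty: "interior_ideal I \<Longrightarrow> I \<noteq> {}"
  unfolding interior_ideal_def by blast

lemma interior_ideal_Int:
  assumes "interior_ideal I" "interior_ideal J" "I \<inter> J \<noteq> {}"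
  shows "interior_ideal (I \<inter> J)"
  using assms unfolding interior_ideal_def by blast

lemma proper_interior_ideal_subset:
  assumes "proper_interior_ideal I" "interior_ideal J" "J \<subseteq> I"
  shows "proper_interior_ideal J"
  using assms unfolding proper_interior_ideal_def by blast

lemma minimal_interior_ideals_eq_if_meet:
  assumes I: "minimal_interior_ideal I" and J: "minimal_interior_ideal J"
    and meet: "I \<inter> J \<noteq> {}"
  shows "I = J"
proof -
  have "interior_ideal (I \<inter> J)"
    using I J meet by (intro interior_ideal_Int) (auto simp: minimal_interior_ideal_def)
  then have "I \<inter> J = I" and "I \<inter> J = J"
    using I J unfolding minimal_interior_ideal_def by blast+
  then show ?thesis by simp
qed

lemma proper_interior_ideal_minimal_if_disjoint:
  fixes I :: "'a::semigroup_mult set"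
  assumes disj: "\<forall>I J::'a set. proper_interior_ideal I \<and> proper_interior_ideal J \<and> I \<noteq> J
           \<longrightarrow> I \<inter> J = {}"
    and I: "proper_interior_ideal I"
  shows "minimal_interior_ideal I"
  unfolding minimal_interior_ideal_def
proof (intro conjI allI impI)
  show "interior_ideal I" using I unfolding proper_interior_ideal_def by blast
next
  fix J
  assume J: "interior_ideal J \<and> J \<subseteq> I"
  then have "proper_interior_ideal J"
    using I proper_interior_ideal_subset by blast
  moreover have "J \<inter> I \<noteq> {}"
    using J interior_ideal_nonempty by blast
  ultimately show "J = I" using disj[rule_format, of J I] I by blast
qed

theorem mainTheorem15:
  shows "(\<forall>I::'a::semigroup_mult set. proper_interior_ideal I \<longrightarrow> minimal_interior_ideal I)
    \<longleftrightarrow> (\<forall>I J::'a set. proper_interior_ideal I \<and> proper_interior_ideal J \<and> I \<noteq> J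
           \<longrightarrow> I \<inter> J = {})"
proof
  assume "\<forall>I::'a set. proper_interior_ideal I \<longrightarrow> minimal_interior_ideal I"
  then show "\<forall>I J::'a set. proper_interior_ideal I \<and> proper_interior_ideal J \<and> I \<noteq> J
           \<longrightarrow> I \<inter> J = {}"
    using minimal_interior_ideals_eq_if_meet by blast
next
  assume "\<forall>I J::'a set. proper_interior_ideal I \<and> proper_interior_ideal J \<and> I \<noteq> J
           \<longrightarrow> I \<inter> J = {}"
  then show "\<forall>I::'a set. proper_interior_ideal I \<longrightarrow> minimal_interior_ideal I"
    using proper_interior_ideal_minimal_if_disjoint by blast
qed

end
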